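(* For all integers $n\ge 1$ and $d\ge 3$, $$m^*(n,d,d-1)\ge \frac{d-1}{e}\sqrt[d-1]{\frac{nd}{d-1}},$$ where $e$ is Euler's number.
   Context: For a binary matrix $M$ and a nonempty set $S$ of its columns, $S$ is a stopping set if the submatrix formed by $S$ has no row with exactly one $1$; $s(M)$ is the minimum size of a stopping set ($+\infty$ if none). $M$ is $(d,k)$-decodable if $s(M)\ge d+1$ and every column has exactly $k$ ones; $m^*(n,d,k)$ is the minimum $m$ such that an $m\times n$ $(d,k)$-decodable binary matrix exists. *)

theory Defs
  imports "HOL-Analysis.Analysis" "HOL-Library.Extended_Nat"
begin

text \<open>A binary m x n matrix is represented as M :: nat => nat => bool, where
  M i j (for i < m, j < n) is the entry in row i, column j (True = 1).\<close>

definition stopping_set :: "nat \<Rightarrow> nat \<Rightarrow> (nat \<Rightarrow> nat \<Rightarrow> bool) \<Rightarrow> nat set \<Rightarrow> bool" where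
  "stopping_set m n M S \<longleftrightarrow>
     S \<noteq> {} \<and> S \<subseteq> {..<n} \<and> (\<forall>i<m. card {j\<in>S. M i j} \<noteq> 1)"

definition stop_dist :: "nat \<Rightarrow> nat \<Rightarrow> (nat \<Rightarrow> nat \<Rightarrow> bool) \<Rightarrow> enat" where
  "stop_dist m n M = (INF S\<in>{S. stopping_set m n M S}. enat (card S))"

definition decodable :: "nat \<Rightarrow> nat \<Rightarrow> nat \<Rightarrow> nat \<Rightarrow> (nat \<Rightarrow> nat \<Rightarrow> bool) \<Rightarrow> bool" where
  "decodable m n d k M \<longleftrightarrow>
     stop_dist m n M \<ge> enat (d + 1) \<and> (\<forall>j<n. card {i. i < m \<and> M i j} = k)"

definition mstar :: "nat \<Rightarrow> nat \<Rightarrow> nat \<Rightarrow> nat" where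
  "mstar n d k = (LEAST m. \<exists>M. decodable m n d k M)"

end

theory Submission
  imports Defs
begin

text \<open>The columns of a \<open>(d, d-1)\<close>-decodable matrix have pairwise distinct supports, and no
  \<open>d\<close>-set of rows contains the supports of \<open>d\<close> columns: otherwise those columns would be all
  \<open>d\<close> facets of a \<open>d\<close>-set and form a stopping set of size \<open>d\<close>. Double counting pairs
  (column, \<open>d\<close>-set containing its support) gives \<open>n (m - d + 1) \<le> (d - 1) C(m, d)\<close>, i.e.
  \<open>n d / (d - 1) \<le> C(m, d - 1) \<le> (e m / (d - 1))\<^sup>d\<^sup>-\<^sup>1\<close>.\<close>

lemma power_div_fact_le_exp:
  fixes x :: real
  assumes "0 \<le> x"
  shows "x ^ k / fact k \<le> exp x"
proof -
  have "(\<Sum>i\<in>{k}. x ^ i / fact i) \<le> (\<Sum>i. x ^ i / fact i)"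
    using summable_exp_generic[of x] assms
    by (intro sum_le_suminf) (auto simp: divide_inverse ac_simps)
  thus ?thesis by (simp add: exp_def divide_inverse ac_simps)
qed

lemma binomial_le_exp_power:
  assumes "k > 0"
  shows "real (m choose k) \<le> (exp 1 * real m / real k) ^ k"
proof -
  have "real (m choose k) * fact k \<le> real m ^ k"
    using binomial_fact_pow[of m k] by (metis of_nat_fact of_nat_le_iff of_nat_mult of_nat_power)
  hence "real (m choose k) \<le> real m ^ k / fact k" by (simp add: field_simps)
  also have "\<dots> = (real m / real k) ^ k * (real k ^ k / fact k)"
    using assms by (simp add: field_simps power_divide)
  also have "\<dots> \<le> (real m / real k) ^ k * exp (real k)"
    by (intro mult_left_mono power_div_fact_le_exp) simp_all
  also have "\<dots> = (exp 1 * real m / real k) ^ k"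
    by (simp add: power_mult_distrib exp_of_nat_mult[symmetric] power_divide)
  finally show ?thesis .
qed

lemma card_mult_le_choose_by_double_counting:
  fixes T :: "'a \<Rightarrow> 'b set"
  assumes "finite I" "finite X"
    and T: "\<And>j. j \<in> I \<Longrightarrow> T j \<subseteq> X \<and> card (T j) = k"
    and few: "\<And>U. U \<subseteq> X \<Longrightarrow> card U = Suc k \<Longrightarrow> card {j \<in> I. T j \<subseteq> U} \<le> c"
  shows "card I * (card X - k) \<le> c * (card X choose Suc k)"
proof -
  define Ks where "Ks = {U. U \<subseteq> X \<and> card U = Suc k}"
  have "finite Ks" unfolding Ks_def using \<open>finite X\<close> by auto
  have up: "card X - k \<le> card {U \<in> Ks. T j \<subseteq> U}" if "j \<in> I" for j
  proof -
    have Tj: "T j \<subseteq> X" "card (T j) = k" "finite (T j)"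
      using T[OF that] \<open>finite X\<close> finite_subset by auto
    have "(\<lambda>x. insert x (T j)) ` (X - T j) \<subseteq> {U \<in> Ks. T j \<subseteq> U}"
      using Tj by (auto simp: Ks_def)
    moreover have "inj_on (\<lambda>x. insert x (T j)) (X - T j)"
      by (auto simp: inj_on_def)
    moreover have "card (X - T j) = card X - k"
      using Tj by (simp add: card_Diff_subset)
    ultimately show ?thesis using \<open>finite Ks\<close>
      by (metis (no_types, lifting) card_image card_mono finite_subset mem_Collect_eq subsetI)
  qed
  have "card I * (card X - k) \<le> (\<Sum>j\<in>I. card {U \<in> Ks. T j \<subseteq> U})"
    using sum_mono[OF up] by simp
  also have "\<dots> = (\<Sum>j\<in>I. \<Sum>U\<in>Ks. if T j \<subseteq> U then 1 else 0)"
    using \<open>finite Ks\<close> by (simp add: sum.inter_filter[symmetric])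
  also have "\<dots> = (\<Sum>U\<in>Ks. card {j \<in> I. T j \<subseteq> U})"
    using \<open>finite I\<close> by (subst sum.swap) (simp add: sum.inter_filter[symmetric])
  also have "\<dots> \<le> (\<Sum>U\<in>Ks. c)"
    by (intro sum_mono few) (auto simp: Ks_def)
  also have "\<dots> = c * (card X choose Suc k)"
    using n_subsets[OF \<open>finite X\<close>] by (simp add: Ks_def)
  finally show ?thesis .
qed

definition column_support :: "nat \<Rightarrow> (nat \<Rightarrow> nat \<Rightarrow> bool) \<Rightarrow> nat \<Rightarrow> nat set" where
  "column_support m M j = {i. i < m \<and> M i j}"

lemma column_support_subset: "column_support m M j \<subseteq> {..<m}"
  by (auto simp: column_support_def)

lemma card_column_support:
  "decodable m n d k M \<Longrightarrow> j < n \<Longrightarrow> card (column_support m M j) = k"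
  by (simp add: decodable_def column_support_def)

lemma decodable_stopping_set_card:
  assumes "decodable m n d k M" "stopping_set m n M S"
  shows "d + 1 \<le> card S"
proof -
  have "stop_dist m n M \<le> enat (card S)"
    unfolding stop_dist_def using assms(2) by (intro INF_lower) auto
  thus ?thesis using assms(1) unfolding decodable_def by (auto dest: order_trans)
qed

lemma stopping_set_of_equal_supports:
  assumes "a < n" "b < n" "a \<noteq> b" "column_support m M a = column_support m M b"
  shows "stopping_set m n M {a, b}"
  unfolding stopping_set_def
proof (intro conjI allI impI)
  fix i assume "i < m"
  hence "M i a = M i b" using assms(4) unfolding column_support_def by blast
  hence "{j \<in> {a, b}. M i j} = (if M i a then {a, b} else {})" by auto
  thus "card {j \<in> {a, b}. M i j} \<noteq> 1" using assms(3) by simp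
qed (use assms in auto)

text \<open>Every row of \<open>U\<close> lies in at least two facets of \<open>U\<close>, hence meets at least two columns.\<close>

lemma stopping_set_of_facets:
  assumes A: "A \<subseteq> {..<n}" and "finite U" "3 \<le> card U"
    and inside: "\<And>j. j \<in> A \<Longrightarrow> column_support m M j \<subseteq> U"
    and facets: "{V. V \<subseteq> U \<and> card V = card U - 1} \<subseteq> column_support m M ` A"
  shows "stopping_set m n M A"
  unfolding stopping_set_def
proof (intro conjI allI impI)
  have "finite A" using A finite_subset by blast
  obtain u where "u \<in> U" using assms(3) by fastforce
  hence "U - {u} \<in> column_support m M ` A" using facets \<open>finite U\<close> by auto
  thus "A \<noteq> {}" by blast
  show "A \<subseteq> {..<n}" by (fact A)
  fix i assume "i < m"
  show "card {j \<in> A. M i j} \<noteq> 1"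
  proof (cases "i \<in> U")
    case False
    hence "{j \<in> A. M i j} = {}"
      using \<open>i < m\<close> inside unfolding column_support_def by blast
    thus ?thesis by (metis card.empty zero_neq_one)
  next
    case True
    have "2 \<le> card (U - {i})" using assms(3) True \<open>finite U\<close> by simp
    then obtain a B where "U - {i} = insert a B" "a \<notin> B" "1 \<le> card B"
      by (auto simp: numeral_2_eq_2 card_le_Suc_iff)
    moreover from this obtain b where "b \<in> B"
      by (auto simp: card_le_Suc_iff)
    ultimately have ab: "a \<in> U" "b \<in> U" "a \<noteq> i" "b \<noteq> i" "a \<noteq> b"
      by blast+
    have "U - {a} \<in> column_support m M ` A" "U - {b} \<in> column_support m M ` A"
      using facets ab \<open>finite U\<close> by auto
    then obtain ja jb where ja: "ja \<in> A" "column_support m M ja = U - {a}"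
      and jb: "jb \<in> A" "column_support m M jb = U - {b}"
      by blast
    have "ja \<noteq> jb" using ja jb ab by auto
    moreover have "M i ja" "M i jb"
      using ja(2) jb(2) ab True unfolding column_support_def by auto
    ultimately have "card {ja, jb} \<le> card {j \<in> A. M i j}"
      using ja jb \<open>finite A\<close> by (intro card_mono) auto
    thus ?thesis using \<open>ja \<noteq> jb\<close> by auto
  qed
qed

lemma decodable_inj_on_column_support:
  assumes "decodable m n d k M" "2 \<le> d"
  shows "inj_on (column_support m M) {..<n}"
proof (rule inj_onI, rule ccontr)
  fix a b
  assume "a \<in> {..<n}" "b \<in> {..<n}" "column_support m M a = column_support m M b" "a \<noteq> b"
  hence "d + 1 \<le> card {a, b}"
    by (intro decodable_stopping_set_card[OF assms(1)] stopping_set_of_equal_supports) auto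
  thus False using \<open>a \<noteq> b\<close> \<open>2 \<le> d\<close> by simp
qed

lemma decodable_le_choose:
  assumes "decodable m n d k M" "2 \<le> d"
  shows "n \<le> m choose k"
proof -
  have "column_support m M j \<in> {V. V \<subseteq> {..<m} \<and> card V = k}" if "j < n" for j
    using card_column_support[OF assms(1) that] column_support_subset by simp
  hence "column_support m M ` {..<n} \<subseteq> {V. V \<subseteq> {..<m} \<and> card V = k}"
    by blast
  hence "card (column_support m M ` {..<n}) \<le> m choose k"
    using card_mono[of "{V. V \<subseteq> {..<m} \<and> card V = k}"] n_subsets[of "{..<m}" k] by simp
  thus ?thesis
    using card_image[OF decodable_inj_on_column_support[OF assms]] by simp
qed

lemma decodable_card_supports_subset_le:
  assumes dec: "decodable m n (Suc k) k M" and "2 \<le> k"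
    and U: "U \<subseteq> {..<m}" "card U = Suc k"
  shows "card {j \<in> {..<n}. column_support m M j \<subseteq> U} \<le> k"
proof -
  define A where "A = {j \<in> {..<n}. column_support m M j \<subseteq> U}"
  define Vs where "Vs = {V. V \<subseteq> U \<and> card V = k}"
  have "finite U" using U(1) finite_subset by blast
  have "finite Vs" unfolding Vs_def using \<open>finite U\<close> by auto
  have card_Vs: "card Vs = Suc k"
    unfolding Vs_def using n_subsets[OF \<open>finite U\<close>, of k] U(2) by simp
  have inj: "inj_on (column_support m M) A"
    using decodable_inj_on_column_support[OF dec] \<open>2 \<le> k\<close>
    unfolding A_def by (auto intro: inj_on_subset)
  have img: "column_support m M ` A \<subseteq> Vs"
    unfolding A_def Vs_def using card_column_support[OF dec] by auto
  have card_A: "card A = card (column_support m M ` A)" using card_image[OF inj] by simp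
  have "card A \<noteq> Suc k"
  proof
    assume "card A = Suc k"
    hence "column_support m M ` A = Vs"
      using card_subset_eq[OF \<open>finite Vs\<close> img] card_A card_Vs by simp
    hence "stopping_set m n M A"
      using U \<open>2 \<le> k\<close> \<open>finite U\<close>
      by (intro stopping_set_of_facets[of A n U]) (auto simp: A_def Vs_def)
    hence "Suc k + 1 \<le> card A" by (rule decodable_stopping_set_card[OF dec])
    thus False using \<open>card A = Suc k\<close> by simp
  qed
  moreover have "card A \<le> Suc k"
    using card_A card_mono[OF \<open>finite Vs\<close> img] card_Vs by simp
  ultimately show ?thesis unfolding A_def by simp
qed

lemma decodable_mult_le_choose:
  assumes dec: "decodable m n (Suc k) k M" and "2 \<le> k" "k < m"
  shows "n * Suc k \<le> k * (m choose k)"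
proof -
  have "card {..<n} * (card {..<m} - k) \<le> k * (card {..<m} choose Suc k)"
    using card_column_support[OF dec] column_support_subset
      decodable_card_supports_subset_le[OF dec \<open>2 \<le> k\<close>]
    by (intro card_mult_le_choose_by_double_counting[where T = "column_support m M"]) auto
  hence "n * (m - k) * Suc k \<le> k * (m choose Suc k) * Suc k"
    by (intro mult_right_mono) simp_all
  hence "n * Suc k * (m - k) \<le> k * (Suc k * (m choose Suc k))"
    by (simp only: ac_simps)
  also have "Suc k * (m choose Suc k) = (m - k) * (m choose k)"
    using times_binomial_minus1_eq[of "Suc k" m] binomial_absorb_comp[of m k] by simp
  finally have "n * Suc k * (m - k) \<le> k * (m choose k) * (m - k)"
    by (simp only: ac_simps)
  thus ?thesis using \<open>k < m\<close> by simp
qed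

lemma decodable_lower_bound:
  assumes dec: "decodable m n (Suc k) k M" and "1 \<le> n" "2 \<le> k"
  shows "real (n * Suc k) / real k \<le> (exp 1 * real m / real k) ^ k"
proof (cases "k < m")
  case True
  have "real (n * Suc k) \<le> real (m choose k) * real k"
    using decodable_mult_le_choose[OF dec \<open>2 \<le> k\<close> True]
    by (metis of_nat_le_iff of_nat_mult mult.commute)
  hence "real (n * Suc k) / real k \<le> real (m choose k)"
    using \<open>2 \<le> k\<close> by (simp add: pos_divide_le_eq)
  also have "\<dots> \<le> (exp 1 * real m / real k) ^ k"
    using \<open>2 \<le> k\<close> by (intro binomial_le_exp_power) simp
  finally show ?thesis .
next
  case False
  have "n \<le> m choose k" using decodable_le_choose[OF dec] \<open>2 \<le> k\<close> by simp
  have "m = k"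
  proof (rule ccontr)
    assume "m \<noteq> k"
    hence "m < k" using False by simp
    hence "m choose k = 0" by (rule binomial_eq_0)
    thus False using \<open>n \<le> m choose k\<close> \<open>1 \<le> n\<close> by linarith
  qed
  hence "n = 1" using \<open>n \<le> m choose k\<close> \<open>1 \<le> n\<close> by simp
  have "real (Suc k) / real k \<le> 2" using \<open>2 \<le> k\<close> by (simp add: pos_divide_le_eq)
  also have "(2::real) \<le> exp 1" using exp_ge_add_one_self[of 1] by simp
  also have "exp 1 \<le> (exp 1 :: real) ^ k"
    using power_increasing[of 1 k "exp 1 :: real"] \<open>2 \<le> k\<close> by simp
  finally show ?thesis using \<open>m = k\<close> \<open>n = 1\<close> \<open>2 \<le> k\<close> by simp
qed

text \<open>The block-diagonal matrix with \<open>k\<close> rows per column has no stopping set at all.\<close>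

lemma decodable_block_diagonal:
  assumes "0 < k"
  shows "decodable (n * k) n d k (\<lambda>i j. i div k = j)"
  unfolding decodable_def
proof (intro conjI allI impI)
  have "\<not> stopping_set (n * k) n (\<lambda>i j. i div k = j) S" for S
  proof
    assume S: "stopping_set (n * k) n (\<lambda>i j. i div k = j) S"
    then obtain j where j: "j \<in> S" "j < n" unfolding stopping_set_def by auto
    have "j * k < n * k" using j assms by simp
    moreover have "{j' \<in> S. j * k div k = j'} = {j}" using j assms by auto
    hence "card {j' \<in> S. j * k div k = j'} = 1" by simp
    ultimately show False using S unfolding stopping_set_def by blast
  qed
  hence no_stop: "Collect (stopping_set (n * k) n (\<lambda>i j. i div k = j)) = {}" by blast
  show "enat (d + 1) \<le> stop_dist (n * k) n (\<lambda>i j. i div k = j)"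
    unfolding stop_dist_def no_stop by simp
  fix j assume "j < n"
  have block: "(i div k = j) \<longleftrightarrow> j * k \<le> i \<and> i < Suc j * k" for i
  proof -
    have "(i div k = j) \<longleftrightarrow> j \<le> i div k \<and> i div k < Suc j" by auto
    also have "\<dots> \<longleftrightarrow> j * k \<le> i \<and> i < Suc j * k"
      using assms by (simp add: less_eq_div_iff_mult_less_eq div_less_iff_less_mult)
    finally show ?thesis .
  qed
  have "Suc j * k \<le> n * k"
    using \<open>j < n\<close> by (intro mult_le_mono1) simp
  hence "{i. i < n * k \<and> i div k = j} = {j * k..<Suc j * k}"
    unfolding block by auto
  thus "card {i. i < n * k \<and> i div k = j} = k" by simp
qed

lemma decodable_mstar:
  assumes "0 < k"
  obtains M where "decodable (mstar n d k) n d k M"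
  using LeastI_ex[of "\<lambda>m. \<exists>M. decodable m n d k M"] decodable_block_diagonal[OF assms]
  unfolding mstar_def by blast

theorem theorem6p4:
  fixes n d :: nat
  assumes "n \<ge> 1" and "d \<ge> 3"
  shows "(real (d - 1) / exp 1) * root (d - 1) (real (n * d) / real (d - 1))
           \<le> real (mstar n d (d - 1))"
proof -
  obtain k where d: "d = Suc k" and "2 \<le> k" using assms(2) by (cases d) auto
  define m where "m = mstar n d k"
  obtain M where "decodable m n (Suc k) k M"
    using decodable_mstar[of k n d] \<open>2 \<le> k\<close> unfolding m_def d by auto
  hence "real (n * Suc k) / real k \<le> (exp 1 * real m / real k) ^ k"
    using decodable_lower_bound assms(1) \<open>2 \<le> k\<close> by blast
  hence "root k (real (n * Suc k) / real k) \<le> root k ((exp 1 * real m / real k) ^ k)"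
    using \<open>2 \<le> k\<close> by (intro real_root_le_mono) auto
  also have "\<dots> = exp 1 * real m / real k"
    using \<open>2 \<le> k\<close> by (intro real_root_power_cancel) auto
  finally have "real k / exp 1 * root k (real (n * Suc k) / real k)
      \<le> real k / exp 1 * (exp 1 * real m / real k)"
    by (intro mult_left_mono) auto
  also have "\<dots> = real m" using \<open>2 \<le> k\<close> by simp
  finally show ?thesis unfolding m_def d by simp
qed

end
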